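(* Let $t\in[n]$ and let $S\subseteq N$ be a maximal $t$-switchable set in which all elements are pairwise connected in $S$. Then $S=N$.
   Context: Fix positive integers $n, r_1,\dots,r_n$, let $N=[r_1]\times\cdots\times[r_n]$, and let $R$ be the polynomial ring over a field in the variables $x_a$, $a\in N$. For $a,b\in N$ and $i\in[n]$, ${\rm s}(i,a,b)\in N$ has $i$-th component $b_i$ and other components equal to those of $a$. Let $d(a,b)=\#\{j: a_j\neq b_j\}$ and $f_{i,a,b}=x_ax_b-x_{{\rm s}(i,a,b)}x_{{\rm s}(i,b,a)}$. A subset $S\subseteq N$ is $t$-switchable if for all $a,b\in S$ with $d(a,b)=2$ and all $i\in[t]$, ${\rm s}(i,a,b)\in S$. Elements $a,b\in S$ are connected in $S$ if there are $a_0=a,\dots,a_k=b$ in $S$ with $d(a_{j-1},a_j)\le 1$ for all $j$. For $t$-switchable $S$: $\tilde{\mathcal{I}}^{\langle t\rangle}_S=(f_{i,a,b}: i\in[t],\ a,b \text{ connected in } S)$, $\mathrm{Var}^{\langle t\rangle}_S=(x_a: a\notin S)$, $P^{\langle t\rangle}_S=\mathrm{Var}^{\langle t\rangle}_S+\tilde{\mathcal{I}}^{\langle t\rangle}_S$. A $t$-switchable $S$ is maximal $t$-switchable if for every $t$-switchable $T$ properly containing $S$, $P^{\langle t\rangle}_S$ and $P^{\langle t\rangle}_T$ are incomparable under inclusion. *)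

theory Defs
  imports Main "HOL-Library.Poly_Mapping"
begin

text \<open>Elements of N = [r_1] x ... x [r_n] are encoded as functions nat => nat
  that vanish outside {1..n}.\<close>
definition grid :: "nat \<Rightarrow> (nat \<Rightarrow> nat) \<Rightarrow> (nat \<Rightarrow> nat) set" where
  "grid n r = {a. (\<forall>i\<in>{1..n}. 1 \<le> a i \<and> a i \<le> r i) \<and> (\<forall>i. i \<notin> {1..n} \<longrightarrow> a i = 0)}"

definition sw :: "nat \<Rightarrow> (nat \<Rightarrow> nat) \<Rightarrow> (nat \<Rightarrow> nat) \<Rightarrow> (nat \<Rightarrow> nat)" where
  "sw i a b = a(i := b i)"

definition hdist :: "nat \<Rightarrow> (nat \<Rightarrow> nat) \<Rightarrow> (nat \<Rightarrow> nat) \<Rightarrow> nat" where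
  "hdist n a b = card {j\<in>{1..n}. a j \<noteq> b j}"

text \<open>Polynomials over the field 'k in the variables x_a (a :: nat => nat).\<close>
type_synonym 'k gpoly = "((nat \<Rightarrow> nat) \<Rightarrow>\<^sub>0 nat) \<Rightarrow>\<^sub>0 'k"

definition Xv :: "(nat \<Rightarrow> nat) \<Rightarrow> 'k::field gpoly" where
  "Xv a = Poly_Mapping.single (Poly_Mapping.single a 1) 1"

definition polyring :: "nat \<Rightarrow> (nat \<Rightarrow> nat) \<Rightarrow> 'k::field gpoly set" where
  "polyring n r = {p. \<forall>m\<in>Poly_Mapping.keys p. Poly_Mapping.keys m \<subseteq> grid n r}"

definition ideal_gen :: "'k::field gpoly set \<Rightarrow> 'k gpoly set \<Rightarrow> 'k gpoly set" where
  "ideal_gen R G = {p. \<exists>F c. finite F \<and> F \<subseteq> G \<and> (\<forall>g\<in>F. c g \<in> R) \<and> p = (\<Sum>g\<in>F. c g * g)}"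

definition fpol :: "nat \<Rightarrow> (nat \<Rightarrow> nat) \<Rightarrow> (nat \<Rightarrow> nat) \<Rightarrow> 'k::field gpoly" where
  "fpol i a b = Xv a * Xv b - Xv (sw i a b) * Xv (sw i b a)"

definition switchable :: "nat \<Rightarrow> (nat \<Rightarrow> nat) \<Rightarrow> nat \<Rightarrow> (nat \<Rightarrow> nat) set \<Rightarrow> bool" where
  "switchable n r t S \<longleftrightarrow> S \<subseteq> grid n r \<and>
     (\<forall>a\<in>S. \<forall>b\<in>S. hdist n a b = 2 \<longrightarrow> (\<forall>i\<in>{1..t}. sw i a b \<in> S))"

definition connected_in :: "nat \<Rightarrow> (nat \<Rightarrow> nat) set \<Rightarrow> (nat \<Rightarrow> nat) \<Rightarrow> (nat \<Rightarrow> nat) \<Rightarrow> bool" where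
  "connected_in n S a b \<longleftrightarrow> a \<in> S \<and> b \<in> S \<and>
     (\<lambda>x y. x \<in> S \<and> y \<in> S \<and> hdist n x y \<le> 1)\<^sup>*\<^sup>* a b"

definition PS :: "nat \<Rightarrow> (nat \<Rightarrow> nat) \<Rightarrow> nat \<Rightarrow> (nat \<Rightarrow> nat) set \<Rightarrow> 'k::field gpoly set" where
  "PS n r t S = ideal_gen (polyring n r)
     ({Xv a | a. a \<in> grid n r \<and> a \<notin> S} \<union>
      {fpol i a b | i a b. i \<in> {1..t} \<and> connected_in n S a b})"

definition maximal_switchable ::
  "'k::field itself \<Rightarrow> nat \<Rightarrow> (nat \<Rightarrow> nat) \<Rightarrow> nat \<Rightarrow> (nat \<Rightarrow> nat) set \<Rightarrow> bool" where
  "maximal_switchable _ n r t S \<longleftrightarrow> switchable n r t S \<and>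
     (\<forall>T. switchable n r t T \<and> S \<subset> T \<longrightarrow>
        \<not> ((PS n r t S :: 'k gpoly set) \<subseteq> PS n r t T) \<and>
        \<not> ((PS n r t T :: 'k gpoly set) \<subseteq> PS n r t S))"

end

theory Submission
  imports Defs
begin

text \<open>Let \<open>N\<close> be the whole grid. Every generator \<open>f\<^sub>i\<^sub>,\<^sub>a\<^sub>,\<^sub>b\<close> of \<open>P\<^sub>N\<close> already lies in \<open>P\<^sub>S\<close>
  when all elements of \<open>S\<close> are pairwise connected: if \<open>a, b \<in> S\<close> it is a generator of \<open>P\<^sub>S\<close>;
  if the switched pair \<open>s(i,a,b), s(i,b,a)\<close> lies in \<open>S\<close>, it is minus such a generator; otherwise
  each of its two monomials contains a variable \<open>x\<^sub>c\<close> with \<open>c \<notin> S\<close>. Hence \<open>P\<^sub>N \<subseteq> P\<^sub>S\<close>, and since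
  \<open>N\<close> is switchable, maximality of \<open>S\<close> forces \<open>S = N\<close>.\<close>

lemma polyring_zero_closed: "(0::'k::field gpoly) \<in> polyring n r"
  by (simp add: polyring_def)

lemma polyring_one_closed: "(1::'k::field gpoly) \<in> polyring n r"
  by (simp add: polyring_def)

lemma polyring_add_closed:
  "p \<in> polyring n r \<Longrightarrow> q \<in> polyring n r \<Longrightarrow> (p + q :: 'k::field gpoly) \<in> polyring n r"
  unfolding polyring_def using keys_add[of p q] by blast

lemma polyring_uminus_closed: "p \<in> polyring n r \<Longrightarrow> (- p :: 'k::field gpoly) \<in> polyring n r"
  unfolding polyring_def by (simp add: keys_minus)

lemma polyring_mult_closed:
  assumes "p \<in> polyring n r" and "q \<in> polyring n r"
  shows "(p * q :: 'k::field gpoly) \<in> polyring n r"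
  unfolding polyring_def
proof (intro CollectI ballI)
  fix m assume "m \<in> Poly_Mapping.keys (p * q)"
  then obtain a b where "m = a + b" "a \<in> Poly_Mapping.keys p" "b \<in> Poly_Mapping.keys q"
    using keys_mult[of p q] by blast
  then show "Poly_Mapping.keys m \<subseteq> grid n r"
    using assms keys_add[of a b] unfolding polyring_def by blast
qed

lemma Xv_in_polyring: "a \<in> grid n r \<Longrightarrow> (Xv a :: 'k::field gpoly) \<in> polyring n r"
  by (simp add: polyring_def Xv_def)

lemma ideal_gen_zero: "0 \<in> ideal_gen R G"
  unfolding ideal_gen_def by (intro CollectI exI[of _ "{}"]) auto

lemma ideal_gen_mult_generator: "c \<in> R \<Longrightarrow> g \<in> G \<Longrightarrow> c * g \<in> ideal_gen R G"
  unfolding ideal_gen_def by (intro CollectI exI[of _ "{g}"] exI[of _ "\<lambda>_. c"]) auto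

lemma ideal_gen_generator: "g \<in> G \<Longrightarrow> (g :: 'k::field gpoly) \<in> ideal_gen (polyring n r) G"
  using ideal_gen_mult_generator[OF polyring_one_closed] by fastforce

lemma ideal_gen_add_closed:
  assumes "p \<in> ideal_gen (polyring n r) G" and "q \<in> ideal_gen (polyring n r) G"
  shows "(p + q :: 'k::field gpoly) \<in> ideal_gen (polyring n r) G"
proof -
  obtain F1 c1 where F1: "finite F1" "F1 \<subseteq> G" "\<forall>g\<in>F1. c1 g \<in> polyring n r"
    and p: "p = (\<Sum>g\<in>F1. c1 g * g)"
    using assms(1) unfolding ideal_gen_def by blast
  obtain F2 c2 where F2: "finite F2" "F2 \<subseteq> G" "\<forall>g\<in>F2. c2 g \<in> polyring n r"
    and q: "q = (\<Sum>g\<in>F2. c2 g * g)"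
    using assms(2) unfolding ideal_gen_def by blast
  define d1 where "d1 g = (if g \<in> F1 then c1 g else 0)" for g
  define d2 where "d2 g = (if g \<in> F2 then c2 g else 0)" for g
  have "p = (\<Sum>g\<in>F1 \<union> F2. d1 g * g)"
    unfolding p using F1(1) F2(1) by (intro sum.mono_neutral_cong_left) (auto simp: d1_def)
  moreover have "q = (\<Sum>g\<in>F1 \<union> F2. d2 g * g)"
    unfolding q using F1(1) F2(1) by (intro sum.mono_neutral_cong_left) (auto simp: d2_def)
  ultimately have "p + q = (\<Sum>g\<in>F1 \<union> F2. (d1 g + d2 g) * g)"
    by (simp add: sum.distrib distrib_right)
  moreover have "d1 g + d2 g \<in> polyring n r" for g
    using F1(3) F2(3)
    by (auto simp: d1_def d2_def polyring_zero_closed intro: polyring_add_closed)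
  ultimately show ?thesis
    unfolding ideal_gen_def using F1 F2
    by (intro CollectI exI[of _ "F1 \<union> F2"] exI[of _ "\<lambda>g. d1 g + d2 g"]) auto
qed

lemma ideal_gen_mult_left_closed:
  assumes "p \<in> ideal_gen (polyring n r) G" and "c \<in> polyring n r"
  shows "(c * p :: 'k::field gpoly) \<in> ideal_gen (polyring n r) G"
proof -
  obtain F d where F: "finite F" "F \<subseteq> G" "\<forall>g\<in>F. d g \<in> polyring n r"
    and p: "p = (\<Sum>g\<in>F. d g * g)"
    using assms(1) unfolding ideal_gen_def by blast
  have "c * p = (\<Sum>g\<in>F. (c * d g) * g)"
    unfolding p by (simp add: sum_distrib_left mult.assoc)
  moreover have "\<forall>g\<in>F. c * d g \<in> polyring n r"
    using F(3) assms(2) by (auto intro: polyring_mult_closed)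
  ultimately show ?thesis
    unfolding ideal_gen_def using F by (intro CollectI exI[of _ F]) auto
qed

lemma ideal_gen_uminus_closed:
  "p \<in> ideal_gen (polyring n r) G \<Longrightarrow> (- p :: 'k::field gpoly) \<in> ideal_gen (polyring n r) G"
  using ideal_gen_mult_left_closed[OF _ polyring_uminus_closed[OF polyring_one_closed]] by fastforce

lemma ideal_gen_diff_closed:
  "p \<in> ideal_gen (polyring n r) G \<Longrightarrow> q \<in> ideal_gen (polyring n r) G \<Longrightarrow>
    (p - q :: 'k::field gpoly) \<in> ideal_gen (polyring n r) G"
  using ideal_gen_add_closed[OF _ ideal_gen_uminus_closed] by fastforce

lemma ideal_gen_subset_ideal_gen:
  assumes "\<And>g. g \<in> G \<Longrightarrow> g \<in> ideal_gen (polyring n r) H"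
  shows "ideal_gen (polyring n r) G \<subseteq> (ideal_gen (polyring n r) H :: 'k::field gpoly set)"
proof
  fix p :: "'k gpoly" assume "p \<in> ideal_gen (polyring n r) G"
  then obtain F c where F: "finite F" "F \<subseteq> G" "\<forall>g\<in>F. c g \<in> polyring n r"
    and p: "p = (\<Sum>g\<in>F. c g * g)"
    unfolding ideal_gen_def by blast
  from F have "(\<Sum>g\<in>F. c g * g) \<in> ideal_gen (polyring n r) H"
  proof (induction F rule: finite_induct)
    case empty
    then show ?case by (simp add: ideal_gen_zero)
  next
    case (insert g F)
    then show ?case by (simp add: ideal_gen_add_closed ideal_gen_mult_left_closed assms)
  qed
  then show "p \<in> ideal_gen (polyring n r) H" using p by simp
qed

lemma sw_in_grid: "a \<in> grid n r \<Longrightarrow> b \<in> grid n r \<Longrightarrow> sw i a b \<in> grid n r"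
  unfolding grid_def sw_def by auto

lemma switchable_grid: "switchable n r t (grid n r)"
  unfolding switchable_def using sw_in_grid by blast

lemma fpol_sw_sw: "fpol i (sw i a b) (sw i b a) = - (fpol i a b :: 'k::field gpoly)"
proof -
  have "sw i (sw i a b) (sw i b a) = a" and "sw i (sw i b a) (sw i a b) = b"
    unfolding sw_def by auto
  then show ?thesis unfolding fpol_def by simp
qed

lemma Xv_mult_in_PS:
  assumes "a \<in> grid n r" and "b \<in> grid n r" and "a \<notin> S \<or> b \<notin> S"
  shows "(Xv a * Xv b :: 'k::field gpoly) \<in> PS n r t S"
  using assms(3)
proof
  assume "a \<notin> S"
  then have "Xv b * Xv a \<in> (PS n r t S :: 'k gpoly set)"
    unfolding PS_def using assms(1,2) by (blast intro: ideal_gen_mult_generator Xv_in_polyring)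
  then show ?thesis by (simp add: mult.commute)
next
  assume "b \<notin> S"
  then show ?thesis
    unfolding PS_def using assms(1,2) by (blast intro: ideal_gen_mult_generator Xv_in_polyring)
qed

lemma fpol_in_PS:
  assumes "connected_in n S a b" and "i \<in> {1..t}"
  shows "(fpol i a b :: 'k::field gpoly) \<in> PS n r t S"
  unfolding PS_def by (rule ideal_gen_generator) (use assms in blast)

lemma fpol_in_PS_of_pairwise_connected:
  assumes conn: "\<forall>a\<in>S. \<forall>b\<in>S. connected_in n S a b"
    and a: "a \<in> grid n r" and b: "b \<in> grid n r" and i: "i \<in> {1..t}"
  shows "(fpol i a b :: 'k::field gpoly) \<in> PS n r t S"
proof -
  have sw_grid: "sw i a b \<in> grid n r" "sw i b a \<in> grid n r"
    using a b by (simp_all add: sw_in_grid)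
  consider "a \<in> S" "b \<in> S" | "sw i a b \<in> S" "sw i b a \<in> S"
    | "a \<notin> S \<or> b \<notin> S" "sw i a b \<notin> S \<or> sw i b a \<notin> S"
    by blast
  then show ?thesis
  proof cases
    case 1
    then show ?thesis by (intro fpol_in_PS i) (simp add: conn)
  next
    case 2
    then have "(fpol i (sw i a b) (sw i b a) :: 'k gpoly) \<in> PS n r t S"
      by (intro fpol_in_PS i) (simp add: conn)
    then have "- (- fpol i a b :: 'k gpoly) \<in> PS n r t S"
      unfolding fpol_sw_sw PS_def by (rule ideal_gen_uminus_closed)
    then show ?thesis by simp
  next
    case 3
    have "Xv a * Xv b \<in> (PS n r t S :: 'k gpoly set)"
      by (rule Xv_mult_in_PS) (use a b 3 in auto)
    moreover have "Xv (sw i a b) * Xv (sw i b a) \<in> (PS n r t S :: 'k gpoly set)"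
      by (rule Xv_mult_in_PS) (use sw_grid 3 in auto)
    ultimately show ?thesis
      unfolding fpol_def PS_def by (rule ideal_gen_diff_closed)
  qed
qed

lemma PS_grid_subset_PS_of_pairwise_connected:
  assumes "\<forall>a\<in>S. \<forall>b\<in>S. connected_in n S a b"
  shows "(PS n r t (grid n r) :: 'k::field gpoly set) \<subseteq> PS n r t S"
  unfolding PS_def[of n r t "grid n r"] PS_def[of n r t S]
proof (rule ideal_gen_subset_ideal_gen)
  fix g :: "'k gpoly"
  assume "g \<in> {Xv a | a. a \<in> grid n r \<and> a \<notin> grid n r} \<union>
    {fpol i a b | i a b. i \<in> {1..t} \<and> connected_in n (grid n r) a b}"
  then obtain i a b where "g = fpol i a b" "i \<in> {1..t}" "a \<in> grid n r" "b \<in> grid n r"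
    unfolding connected_in_def by blast
  then show "g \<in> ideal_gen (polyring n r) ({Xv a | a. a \<in> grid n r \<and> a \<notin> S} \<union>
      {fpol i a b | i a b. i \<in> {1..t} \<and> connected_in n S a b})"
    using fpol_in_PS_of_pairwise_connected[OF assms] unfolding PS_def by blast
qed

theorem proposition4p8:
  fixes n t :: nat and r :: "nat \<Rightarrow> nat" and S :: "(nat \<Rightarrow> nat) set"
  assumes "1 \<le> t" and "t \<le> n"
    and "\<forall>i\<in>{1..n}. 0 < r i"
    and "maximal_switchable TYPE('k::field) n r t S"
    and "\<forall>a\<in>S. \<forall>b\<in>S. connected_in n S a b"
  shows "S = grid n r"
proof (rule ccontr)
  assume "S \<noteq> grid n r"
  moreover have "S \<subseteq> grid n r"
    using assms(4) unfolding maximal_switchable_def switchable_def by blast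
  ultimately have "switchable n r t (grid n r) \<and> S \<subset> grid n r"
    using switchable_grid by blast
  then have "\<not> (PS n r t (grid n r) :: 'k gpoly set) \<subseteq> PS n r t S"
    using assms(4) unfolding maximal_switchable_def by blast
  then show False
    using PS_grid_subset_PS_of_pairwise_connected[OF assms(5)] by blast
qed

end
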